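(* Let $\sigma\in\mathbf{SL}(2,\mathbb{C})$, $z\in\mathbb{C}$, $\lambda>0$, $g=n[z]a[\lambda]$ and $P=z+\lambda j\in\mathbb{H}^3$. Then \[\Phi_{T(\sigma g)}=B\circ R(d\sigma,P)\circ B,\qquad B=\begin{pmatrix}1&0&0\\0&1&0\\0&0&-1\end{pmatrix}.\]
   Context: $\mathbb{H}^3=\{z+\lambda j:z\in\mathbb{C},\lambda>0\}\subset\mathbb{R}^3$ with $\mathbf{SL}(2,\mathbb{C})$ acting by $\begin{pmatrix}a&b\\c&d\end{pmatrix}(z+\lambda j)=\frac{(az+b)(\bar c\bar z+\bar d)+a\bar c\lambda^2}{|cz+d|^2+|c|^2\lambda^2}+\frac{\lambda}{|cz+d|^2+|c|^2\lambda^2}j$; $\mathrm{Im}(z+\lambda j):=\lambda$. $n[z]=\begin{pmatrix}1&z\\0&1\end{pmatrix}$, $a[\mu]=\begin{pmatrix}\sqrt\mu&0\\0&1/\sqrt\mu\end{pmatrix}$ ($\mu>0$). Every $g\in\mathbf{SL}(2,\mathbb{C})$ has a unique Iwasawa decomposition $g=n[w]a[\mu]K$ with $w\in\mathbb{C},\mu>0,K\in\mathbf{SU}(2)$; $T(g):=K$. $\Phi:\mathbf{SU}(2)\to\mathbf{SO}(3)$ is the double cover given, for $A=\begin{pmatrix}\alpha&\beta\\-\bar\beta&\bar\alpha\end{pmatrix}$, by $\Phi_A=\begin{pmatrix}\mathrm{Re}(\alpha^2-\beta^2)&-\mathrm{Im}(\alpha^2+\beta^2)&2\mathrm{Re}(\alpha\beta)\\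 \mathrm{Im}(\alpha^2-\beta^2)&\mathrm{Re}(\alpha^2+\beta^2)&2\mathrm{Im}(\alpha\beta)\\ -2\mathrm{Re}(\bar\alpha\beta)&2\mathrm{Im}(\alpha\bar\beta)&|\alpha|^2-|\beta|^2\end{pmatrix}$. For $\sigma\in\mathbf{SL}(2,\mathbb{C})$ and $P=z+\lambda j$, $R(d\sigma,P)$ is the linear map of $\mathbb{R}^3$ defined by $R(d\sigma,P)v:=\frac{\lambda}{\mathrm{Im}\,\sigma P}\,d\sigma_P(v)$, where $d\sigma_P$ is the differential at $P$ of the map $\sigma:\mathbb{H}^3\to\mathbb{H}^3\subset\mathbb{R}^3$ (tangent spaces identified with $\mathbb{R}^3$), written as a matrix in the basis $e_1,e_2,e_3$ (directions $x,y,\lambda$). *)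

theory Defs
  imports "HOL-Analysis.Analysis"
begin

definition mat2 :: "complex \<Rightarrow> complex \<Rightarrow> complex \<Rightarrow> complex \<Rightarrow> complex^2^2" where
  "mat2 a b c d = (\<chi> i j. if i = 1 then (if j = 1 then a else b) else (if j = 1 then c else d))"

definition SL2C :: "(complex^2^2) set" where
  "SL2C = {g. det g = 1}"

definition ctrans :: "complex^2^2 \<Rightarrow> complex^2^2" where
  "ctrans A = (\<chi> i j. cnj (A $ j $ i))"

definition SU2 :: "(complex^2^2) set" where
  "SU2 = {K. det K = 1 \<and> K ** ctrans K = mat 1}"

definition nmat :: "complex \<Rightarrow> complex^2^2" where
  "nmat z = mat2 1 z 0 1"

definition amat :: "real \<Rightarrow> complex^2^2" where
  "amat \<mu> = mat2 (complex_of_real (sqrt \<mu>)) 0 0 (complex_of_real (1 / sqrt \<mu>))"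

definition H3 :: "(real^3) set" where
  "H3 = {P. P $ 3 > 0}"

definition pt :: "complex \<Rightarrow> real \<Rightarrow> real^3" where
  "pt z l = vector [Re z, Im z, l]"

text \<open>The action of SL(2,C) on H^3 (the given formula, viewed as a map R^3 -> R^3).\<close>
definition act :: "complex^2^2 \<Rightarrow> real^3 \<Rightarrow> real^3" where
  "act g P = (let a = g$1$1; b = g$1$2; c = g$2$1; d = g$2$2;
                  z = Complex (P$1) (P$2); l = P$3;
                  D = (cmod (c*z + d))^2 + (cmod c)^2 * l^2;
                  w = ((a*z + b) * (cnj c * cnj z + cnj d) + a * cnj c * complex_of_real (l^2)) / complex_of_real D
              in pt w (l / D))"

text \<open>Iwasawa K-part: the unique K in SU(2) with g = n[w] a[mu] K.\<close>
definition Tpart :: "complex^2^2 \<Rightarrow> complex^2^2" where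
  "Tpart g = (THE K. K \<in> SU2 \<and> (\<exists>w \<mu>. \<mu> > 0 \<and> g = nmat w ** amat \<mu> ** K))"

definition Phi :: "complex^2^2 \<Rightarrow> real^3^3" where
  "Phi A = (let \<alpha> = A$1$1; \<beta> = A$1$2 in
     vector [vector [Re (\<alpha>^2 - \<beta>^2), - Im (\<alpha>^2 + \<beta>^2), 2 * Re (\<alpha>*\<beta>)],
             vector [Im (\<alpha>^2 - \<beta>^2), Re (\<alpha>^2 + \<beta>^2), 2 * Im (\<alpha>*\<beta>)],
             vector [- 2 * Re (cnj \<alpha> * \<beta>), 2 * Im (\<alpha> * cnj \<beta>), (cmod \<alpha>)^2 - (cmod \<beta>)^2]])"

definition Rmat :: "complex^2^2 \<Rightarrow> real^3 \<Rightarrow> real^3^3" where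
  "Rmat \<sigma> P = (P$3 / (act \<sigma> P)$3) *\<^sub>R matrix (frechet_derivative (act \<sigma>) (at P))"

definition Bmat :: "real^3^3" where
  "Bmat = vector [vector [1, 0, 0], vector [0, 1, 0], vector [0, 0, -1]]"

end

theory Submission
  imports Defs
begin

text \<open>
  Since n[w] a[\<mu>] is upper triangular with lower right entry 1/sqrt \<mu>, the bottom row of
  g = n[w] a[\<mu>] K is a positive multiple of the bottom row (\<gamma>, \<delta>) of K, and an element of
  SU(2) is determined by its unit bottom row as [[cnj \<delta>, -cnj \<gamma>], [\<gamma>, \<delta>]].  So T(g) is the
  normalised bottom row of g, completed to SU(2).  For \<sigma> = [[a, b], [c, d]] the bottom row of
  \<sigma> n[z] a[\<lambda>] is proportional to (c\<lambda>, u) with u = cz + d, hence T(\<sigma> n[z] a[\<lambda>]) has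
  \<alpha> = cnj u / \<rho> and \<beta> = -cnj c \<lambda> / \<rho>, where \<rho>^2 = |u|^2 + |c|^2 \<lambda>^2.

  On the other side \<rho>^2 = \<lambda> / Im \<sigma>P, and differentiating the action in the complex coordinate
  x + iy shows that \<rho>^2 d\<sigma>_P has entries quadratic in cnj u / \<rho> and cnj c \<lambda> / \<rho>; they are
  exactly the entries of \<Phi>(\<alpha>, \<beta>), up to the sign changes effected by B.
\<close>

lemma mat2_nth [simp]:
  "mat2 a b c d $ 1 $ 1 = a" "mat2 a b c d $ 1 $ 2 = b"
  "mat2 a b c d $ 2 $ 1 = c" "mat2 a b c d $ 2 $ 2 = d"
  by (simp_all add: mat2_def)

lemma mat2_collapse: "mat2 (A$1$1) (A$1$2) (A$2$1) (A$2$2) = A"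
  by (simp add: vec_eq_iff forall_2)

lemma mat2_eq_iff: "mat2 a b c d = mat2 a' b' c' d' \<longleftrightarrow> a = a' \<and> b = b' \<and> c = c' \<and> d = d'"
  by (metis mat2_nth)

lemma mat2_mult:
  "mat2 a b c d ** mat2 a' b' c' d' = mat2 (a*a' + b*c') (a*b' + b*d') (c*a' + d*c') (c*b' + d*d')"
  by (simp add: vec_eq_iff forall_2 matrix_matrix_mult_def sum_2)

lemma det_mat2: "det (mat2 a b c d) = a*d - b*c"
  by (simp add: det_2)

lemma ctrans_mat2: "ctrans (mat2 a b c d) = mat2 (cnj a) (cnj c) (cnj b) (cnj d)"
  by (simp add: vec_eq_iff forall_2 ctrans_def)

lemma mat_1_eq_mat2: "mat 1 = mat2 1 0 0 1"
  by (simp add: vec_eq_iff forall_2 mat_def)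

lemma nmat_amat: "nmat w ** amat \<mu> = mat2 (sqrt \<mu>) (w / sqrt \<mu>) 0 (1 / sqrt \<mu>)"
  by (simp add: nmat_def amat_def mat2_mult)

definition su2_of :: "complex \<Rightarrow> complex \<Rightarrow> complex^2^2" where
  "su2_of \<gamma> \<delta> = mat2 (cnj \<delta>) (- cnj \<gamma>) \<gamma> \<delta>"

lemma su2_of_in_SU2:
  assumes "(cmod \<gamma>)^2 + (cmod \<delta>)^2 = 1"
  shows "su2_of \<gamma> \<delta> \<in> SU2"
proof -
  have "\<gamma> * cnj \<gamma> + \<delta> * cnj \<delta> = 1"
    by (simp only: complex_norm_square[symmetric] of_real_add[symmetric] assms) simp
  then show ?thesis
    by (simp add: SU2_def su2_of_def det_mat2 ctrans_mat2 mat2_mult mat_1_eq_mat2 mat2_eq_iff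
        algebra_simps)
qed

lemma SU2_eq_su2_of:
  assumes "K \<in> SU2"
  shows "K = su2_of (K$2$1) (K$2$2)" and "(cmod (K$2$1))^2 + (cmod (K$2$2))^2 = 1"
proof -
  obtain a b c d where K: "K = mat2 a b c d" by (metis mat2_collapse)
  have det: "a*d - b*c = 1" and unitary: "K ** ctrans K = mat 1"
    using assms by (simp_all add: SU2_def K det_mat2)
  have row2: "c * cnj c + d * cnj d = 1" and orth: "a * cnj c + b * cnj d = 0"
    using unitary by (simp_all add: K ctrans_mat2 mat2_mult mat_1_eq_mat2 mat2_eq_iff)
  have "a = a * (c * cnj c + d * cnj d)" using row2 by simp
  also have "\<dots> = cnj d * (a*d - b*c) + c * (a * cnj c + b * cnj d)" by algebra
  finally have "a = cnj d" using det orth by simp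
  have "b = b * (c * cnj c + d * cnj d)" using row2 by simp
  also have "\<dots> = - cnj c * (a*d - b*c) + d * (a * cnj c + b * cnj d)" by algebra
  finally have "b = - cnj c" using det orth by simp
  with \<open>a = cnj d\<close> show "K = su2_of (K$2$1) (K$2$2)" by (simp add: K su2_of_def)
  show "(cmod (K$2$1))^2 + (cmod (K$2$2))^2 = 1"
    unfolding K mat2_nth cmod_power2 using arg_cong[OF row2, of Re] by (simp add: power2_eq_square)
qed

lemma cmod_sq_sum_pos_iff: "(cmod \<gamma>)^2 + (cmod \<delta>)^2 > 0 \<longleftrightarrow> (\<gamma>, \<delta>) \<noteq> (0, 0)"
  by (simp add: add_nonneg_eq_0_iff order_less_le)

definition iwasawa_K :: "complex \<Rightarrow> complex \<Rightarrow> complex^2^2" where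
  "iwasawa_K \<gamma> \<delta> = (let \<rho> = complex_of_real (sqrt ((cmod \<gamma>)^2 + (cmod \<delta>)^2)) in su2_of (\<gamma> / \<rho>) (\<delta> / \<rho>))"

lemma iwasawa_K_SU2:
  assumes "(\<gamma>, \<delta>) \<noteq> (0, 0)"
  shows "iwasawa_K \<gamma> \<delta> \<in> SU2"
proof -
  define N where "N = (cmod \<gamma>)^2 + (cmod \<delta>)^2"
  have "N > 0" using assms by (simp add: N_def cmod_sq_sum_pos_iff)
  then have "(cmod (\<gamma> / of_real (sqrt N)))^2 + (cmod (\<delta> / of_real (sqrt N)))^2 = 1"
    unfolding norm_divide power_divide add_divide_distrib[symmetric] N_def[symmetric] by simp
  then show ?thesis unfolding iwasawa_K_def Let_def N_def by (rule su2_of_in_SU2)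
qed

lemma iwasawa_K_unit:
  assumes "(cmod \<gamma>)^2 + (cmod \<delta>)^2 = 1"
  shows "iwasawa_K \<gamma> \<delta> = su2_of \<gamma> \<delta>"
  by (simp add: iwasawa_K_def assms)

lemma iwasawa_K_scale:
  assumes "t > 0"
  shows "iwasawa_K (of_real t * \<gamma>) (of_real t * \<delta>) = iwasawa_K \<gamma> \<delta>"
proof -
  have "sqrt ((cmod (of_real t * \<gamma>))^2 + (cmod (of_real t * \<delta>))^2)
        = t * sqrt ((cmod \<gamma>)^2 + (cmod \<delta>)^2)"
    using assms by (simp add: norm_mult power_mult_distrib real_sqrt_mult
        distrib_left[symmetric])
  then show ?thesis using assms by (simp add: iwasawa_K_def Let_def)
qed

lemma iwasawa_decomposition:
  assumes det: "a*d - b*c = 1"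
  defines "N \<equiv> (cmod c)^2 + (cmod d)^2"
  shows "mat2 a b c d = nmat ((a * cnj c + b * cnj d) / of_real N) ** amat (1 / N) ** iwasawa_K c d"
proof -
  have "N > 0" using det by (auto simp: N_def cmod_sq_sum_pos_iff)
  define \<rho> where "\<rho> = complex_of_real (sqrt N)"
  have N: "of_real N = c * cnj c + d * cnj d"
    by (simp only: N_def of_real_add complex_norm_square)
  have \<rho>: "\<rho> \<noteq> 0" "cnj \<rho> = \<rho>" "\<rho> * \<rho> = c * cnj c + d * cnj d" "of_real N = \<rho> * \<rho>"
    using \<open>N > 0\<close> N by (auto simp: \<rho>_def simp flip: of_real_mult)
  have K: "iwasawa_K c d = su2_of (c / \<rho>) (d / \<rho>)"
    by (simp add: iwasawa_K_def Let_def \<rho>_def N_def)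
  have NA: "nmat w ** amat (1 / N) = mat2 (1 / \<rho>) (w * \<rho>) 0 \<rho>" for w
    using \<open>N > 0\<close> by (simp add: nmat_amat \<rho>_def real_sqrt_divide)
  show ?thesis
    unfolding K NA \<rho>(4) using \<rho>(1,2)
    apply (simp add: su2_of_def mat2_mult mat2_eq_iff field_simps)
    using \<rho>(3) det by (intro conjI) algebra+
qed

lemma Tpart_eq_iwasawa_K:
  assumes "det g = 1"
  shows "Tpart g = iwasawa_K (g$2$1) (g$2$2)"
  unfolding Tpart_def
proof (rule the_equality)
  obtain a b c d where g: "g = mat2 a b c d" by (metis mat2_collapse)
  have det: "a*d - b*c = 1" using assms by (simp add: g det_mat2)
  then have "(c, d) \<noteq> (0, 0)" by auto
  then have "1 / ((cmod c)^2 + (cmod d)^2) > 0" by (simp add: cmod_sq_sum_pos_iff)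
  then show "iwasawa_K (g$2$1) (g$2$2) \<in> SU2 \<and>
      (\<exists>w \<mu>. \<mu> > 0 \<and> g = nmat w ** amat \<mu> ** iwasawa_K (g$2$1) (g$2$2))"
    using iwasawa_K_SU2[OF \<open>(c, d) \<noteq> (0, 0)\<close>] iwasawa_decomposition[OF det]
    unfolding g mat2_nth by blast
next
  fix K assume "K \<in> SU2 \<and> (\<exists>w \<mu>. \<mu> > 0 \<and> g = nmat w ** amat \<mu> ** K)"
  then obtain w \<mu> where K: "K \<in> SU2" and "\<mu> > 0" and g: "g = nmat w ** amat \<mu> ** K" by blast
  obtain k1 k2 k3 k4 where Kk: "K = mat2 k1 k2 k3 k4" by (metis mat2_collapse)
  have "g$2$1 = of_real (1 / sqrt \<mu>) * K$2$1" and "g$2$2 = of_real (1 / sqrt \<mu>) * K$2$2"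
    by (simp_all add: g Kk nmat_amat mat2_mult)
  then have "iwasawa_K (g$2$1) (g$2$2) = iwasawa_K (K$2$1) (K$2$2)"
    using iwasawa_K_scale[of "1 / sqrt \<mu>"] \<open>\<mu> > 0\<close> by simp
  also have "\<dots> = K"
    using SU2_eq_su2_of[OF K] by (simp add: iwasawa_K_unit)
  finally show "K = iwasawa_K (g$2$1) (g$2$2)" ..
qed

lemma det_nmat [simp]: "det (nmat z) = 1"
  by (simp add: nmat_def det_mat2)

lemma det_amat: "\<mu> > 0 \<Longrightarrow> det (amat \<mu>) = 1"
  by (simp add: amat_def det_mat2 flip: of_real_mult)

lemma Tpart_mult_nmat_amat:
  assumes det: "a*d - b*c = 1" and "l > 0"
  shows "Tpart (mat2 a b c d ** (nmat z ** amat l)) = iwasawa_K (c * of_real l) (c*z + d)"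
proof -
  have l: "complex_of_real l = of_real (sqrt l) * of_real (sqrt l)"
    using \<open>l > 0\<close> by (simp flip: of_real_mult)
  have "det (mat2 a b c d ** (nmat z ** amat l)) = 1"
    using assms by (simp add: det_mul det_amat det_mat2)
  then have "Tpart (mat2 a b c d ** (nmat z ** amat l)) =
      iwasawa_K (of_real (1 / sqrt l) * (c * of_real l)) (of_real (1 / sqrt l) * (c*z + d))"
    using \<open>l > 0\<close> unfolding l by (simp add: Tpart_eq_iwasawa_K nmat_amat mat2_mult field_simps)
  also have "\<dots> = iwasawa_K (c * of_real l) (c*z + d)"
    using \<open>l > 0\<close> by (intro iwasawa_K_scale) simp
  finally show ?thesis .
qed

lemma of_real_cmod_sq_sum:
  "complex_of_real ((cmod w)^2 + (cmod c)^2 * l^2) = w * cnj w + c * cnj c * of_real l * of_real l"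
proof -
  have "complex_of_real (l^2) = of_real l * of_real l" by (simp add: power2_eq_square)
  then show ?thesis by (simp only: of_real_add of_real_mult complex_norm_square mult.assoc)
qed

lemma act_denominator_pos:
  assumes "a*d - b*c = 1" and "l \<noteq> 0"
  shows "(cmod (c*z + d))^2 + (cmod c)^2 * l^2 > 0"
proof -
  have "(c * of_real l, c*z + d) \<noteq> (0, 0)" using assms by auto
  then show ?thesis
    using cmod_sq_sum_pos_iff[of "c * of_real l" "c*z + d"]
    by (simp add: norm_mult power_mult_distrib add.commute)
qed

definition hcoord :: "real^3 \<Rightarrow> complex" where
  "hcoord Q = of_real (Q$1) + \<i> * of_real (Q$2)"

lemma has_derivative_vec_nth [derivative_intros]: "((\<lambda>x. x $ i) has_derivative (\<lambda>h. h $ i)) F"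
  by (rule bounded_linear_imp_has_derivative[OF bounded_linear_vec_nth])

lemma hcoord_has_derivative [derivative_intros]: "(hcoord has_derivative hcoord) F"
  unfolding hcoord_def[abs_def] by (intro derivative_intros)

lemma hcoord_pt [simp]: "hcoord (pt z l) = z"
  by (simp add: hcoord_def pt_def complex_eq_iff)

lemma pt_nth_3 [simp]: "pt z l $ 3 = l"
  by (simp add: pt_def)

lemma has_derivative_vector3:
  assumes "(f has_derivative f') F" "(g has_derivative g') F" "(k has_derivative k') F"
  shows "((\<lambda>x. vector [f x, g x, k x] :: real^3) has_derivative (\<lambda>h. vector [f' h, g' h, k' h])) F"
proof -
  have "(vector [x, y, w] :: real^3) = x *\<^sub>R axis 1 1 + y *\<^sub>R axis 2 1 + w *\<^sub>R axis 3 1" for x y w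
    by (simp add: vec_eq_iff forall_3 axis_def)
  then show ?thesis by (simp only:) (intro derivative_intros assms)
qed

lemma act_complex_form:
  "act (mat2 a b c d) Q =
    (let Z = hcoord Q; L = complex_of_real (Q$3); D = (c*Z + d) * cnj (c*Z + d) + c * cnj c * L * L
     in pt (((a*Z + b) * cnj (c*Z + d) + a * cnj c * L * L) / D) (Re (L / D)))"
proof -
  have Z: "Complex (Q$1) (Q$2) = hcoord Q" by (simp add: hcoord_def Complex_eq)
  have "Q$3 / r = Re (of_real (Q$3) / complex_of_real r)" for r by simp
  then show ?thesis
    unfolding act_def Let_def mat2_nth Z of_real_cmod_sq_sum[symmetric]
    by (simp add: power2_eq_square mult.assoc)
qed

definition act_deriv :: "complex \<Rightarrow> complex \<Rightarrow> real \<Rightarrow> real^3 \<Rightarrow> real^3" where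
  "act_deriv c u l h =
    (let Zh = hcoord h; t = complex_of_real (h$3); L = complex_of_real l;
         D = u * cnj u + c * cnj c * L * L;
         dw = ((cnj u)^2 * Zh - (cnj c)^2 * L * L * cnj Zh + 2 * cnj u * cnj c * L * t) / (D * D);
         dl = (t * (u * cnj u - c * cnj c * L * L) - L * (c * Zh * cnj u + u * cnj c * cnj Zh)) / (D * D)
     in vector [Re dw, Im dw, Re dl])"

lemma act_has_derivative:
  assumes det: "a*d - b*c = 1" and "l > 0"
  shows "(act (mat2 a b c d) has_derivative act_deriv c (c*z + d) l) (at (pt z l))"
proof -
  define u where "u = c*z + d"
  define D where "D = u * cnj u + c * cnj c * of_real l * of_real l"
  have "D \<noteq> 0"
    using act_denominator_pos[OF det, of l z] \<open>l > 0\<close>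
    unfolding D_def u_def of_real_cmod_sq_sum[symmetric] by (metis of_real_eq_0_iff less_irrefl)
  have horizontal: "((\<lambda>Q. ((a * hcoord Q + b) * cnj (c * hcoord Q + d) + a * cnj c * of_real (Q$3) * of_real (Q$3)) /
              ((c * hcoord Q + d) * cnj (c * hcoord Q + d) + c * cnj c * of_real (Q$3) * of_real (Q$3)))
     has_derivative (\<lambda>h. ((cnj u)^2 * hcoord h - (cnj c)^2 * of_real l * of_real l * cnj (hcoord h)
          + 2 * cnj u * cnj c * of_real l * of_real (h$3)) / (D * D))) (at (pt z l))"
    apply (rule has_derivative_eq_rhs, (rule derivative_intros)+)
    using \<open>D \<noteq> 0\<close> apply (simp add: D_def u_def)
    apply (rule ext, simp only: hcoord_pt pt_nth_3 flip: u_def D_def)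
    using \<open>D \<noteq> 0\<close> apply (simp add: field_simps)
    unfolding D_def u_def using det by algebra
  have height: "((\<lambda>Q. of_real (Q$3) /
              ((c * hcoord Q + d) * cnj (c * hcoord Q + d) + c * cnj c * of_real (Q$3) * of_real (Q$3)))
     has_derivative (\<lambda>h. (of_real (h$3) * (u * cnj u - c * cnj c * of_real l * of_real l)
          - of_real l * (c * hcoord h * cnj u + u * cnj c * cnj (hcoord h))) / (D * D))) (at (pt z l))"
    apply (rule has_derivative_eq_rhs, (rule derivative_intros)+)
    using \<open>D \<noteq> 0\<close> apply (simp add: D_def u_def)
    apply (rule ext, simp only: hcoord_pt pt_nth_3 flip: u_def D_def)
    using \<open>D \<noteq> 0\<close> apply (simp add: field_simps)
    unfolding D_def u_def by algebra
  show ?thesis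
    using has_derivative_vector3[OF has_derivative_Re[OF horizontal] has_derivative_Im[OF horizontal]
        has_derivative_Re[OF height]]
    by (simp add: act_complex_form[abs_def] act_deriv_def[abs_def] Let_def pt_def D_def u_def)
qed

lemma Bmat_conj_nth:
  fixes M :: "real^3^3"
  shows "(Bmat ** M ** Bmat) $ i $ j = (if (i = 3) = (j = 3) then M $ i $ j else - M $ i $ j)"
  using exhaust_3[of i] exhaust_3[of j]
  by (auto simp: Bmat_def matrix_matrix_mult_def sum_3)

lemma Phi_iwasawa_K:
  fixes c u :: complex and l :: real
  defines "D \<equiv> (cmod u)^2 + (cmod c)^2 * l^2"
  assumes "D > 0"
  shows "Phi (iwasawa_K (c * of_real l) u) = Bmat ** (D *\<^sub>R matrix (act_deriv c u l)) ** Bmat"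
proof -
  define s where "s = sqrt D"
  have s: "s > 0" "s * s = D" using \<open>D > 0\<close> by (simp_all add: s_def)
  have den: "u * cnj u + c * cnj c * of_real l * of_real l = of_real (s * s)"
    by (simp only: s(2) D_def of_real_cmod_sq_sum)
  have "sqrt ((cmod (c * of_real l))^2 + (cmod u)^2) = s"
    by (simp add: s_def D_def norm_mult power_mult_distrib add.commute)
  then have K: "iwasawa_K (c * of_real l) u = su2_of (c * of_real l / of_real s) (u / of_real s)"
    by (simp add: iwasawa_K_def Let_def)
  have cmod_sq: "cmod x * cmod x = Re x * Re x + Im x * Im x" for x
    by (metis cmod_power2 power2_eq_square)
  show ?thesis
    unfolding vec_eq_iff forall_3 Bmat_conj_nth K
    apply (simp add: Phi_def su2_of_def matrix_def act_deriv_def Let_def hcoord_def axis_def den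
      Re_divide_of_real Im_divide_of_real cmod_sq power2_eq_square flip: of_real_mult)
    using s \<open>D > 0\<close> by (simp add: field_simps)
qed

lemma Rmat_pt:
  assumes det: "a*d - b*c = 1" and "l > 0"
  shows "Rmat (mat2 a b c d) (pt z l) =
    ((cmod (c*z + d))^2 + (cmod c)^2 * l^2) *\<^sub>R matrix (act_deriv c (c*z + d) l)"
proof -
  define D where "D = (cmod (c*z + d))^2 + (cmod c)^2 * l^2"
  have "D > 0" using act_denominator_pos[OF det] \<open>l > 0\<close> by (simp add: D_def)
  have "act (mat2 a b c d) (pt z l) $ 3 = l / D"
    by (simp add: act_def Let_def pt_def D_def)
  then show ?thesis
    using \<open>D > 0\<close> \<open>l > 0\<close>
    by (simp add: Rmat_def frechet_derivative_at[OF act_has_derivative[OF det \<open>l > 0\<close>], symmetric]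
        D_def)
qed

theorem mainTheorem3:
  fixes \<sigma> :: "complex^2^2" and z :: complex and l :: real
  assumes "\<sigma> \<in> SL2C" and "l > 0"
  shows "act \<sigma> differentiable (at (pt z l)) \<and>
         Phi (Tpart (\<sigma> ** (nmat z ** amat l))) = Bmat ** Rmat \<sigma> (pt z l) ** Bmat"
proof -
  obtain a b c d where \<sigma>: "\<sigma> = mat2 a b c d" by (metis mat2_collapse)
  have det: "a*d - b*c = 1" using assms(1) by (simp add: SL2C_def \<sigma> det_mat2)
  have "(cmod (c*z + d))^2 + (cmod c)^2 * l^2 > 0"
    using act_denominator_pos[OF det] \<open>l > 0\<close> by simp
  then show ?thesis
    using act_has_derivative[OF det \<open>l > 0\<close>] Tpart_mult_nmat_amat[OF det \<open>l > 0\<close>]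
      Rmat_pt[OF det \<open>l > 0\<close>] Phi_iwasawa_K
    by (auto simp: \<sigma> intro: differentiableI)
qed

end
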